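(* Let $D$ be a link diagram on $S$ admitting a source-sink structure, and let $p$ be a point on an edge of $D$. Let $D\sqcup\bigcirc$ be the diagram obtained by adding a small contractible crossingless circle $O$ inside a small disk near $p$, disjoint from $D$. Identify $[[D\sqcup\bigcirc]]$ with $[[D]]\otimes V$, where the last factor corresponds to $O$; under this identification the differential $d_h$ of $D\sqcup\bigcirc$ is $d_h\otimes\mathrm{id}$. Then $[[D]]\otimes v_+$ is a subcomplex; denote the quotient complex by $[[D\sqcup\bigcirc]]_{v_+=0}$. Define two maps state by state. For a state $s$ of $D$, let $C_s$ be the circle of $D_s$ through $p$. - $\Phi\colon[[D]]\otimes V\to[[D]]$ merges $O$ into $C_s$: it applies $m_h$ to the factors of $C_s$ (first) and $O$ (second), and the identity on the other factors. - $\Psi\colon[[D]]\to[[D]]\otimes V$ splits $O$ off $C_s$: it applies $\Delta_h$ to the factor of $C_s$, producing factors for $C_s$ (first) and $O$ (second), and the identity on the other factors. Then the restriction $\Phi\colon[[D]]\otimes v_+\to[[D]]$ and the composition of $\Psi$ with the quotient map, $[[D]]\to[[D\sqcup\bigcirc]]_{v_+=0}$, are both isomorphisms of chain complexes with respect to $d_h$.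
   Context: Throughout, $S$ is a connected closed oriented surface and all vector spaces are over $\mathbb Z_2$. Links in $S\times[0,1]$ are represented by diagrams on $S$: 4-valent graphs embedded in $S$, possibly together with closed components that have no vertices, with over/under-crossing information at each crossing. A source-sink structure on a diagram $D$ is an orientation of the edges of $D$, viewed as a 4-valent graph, such that at each crossing the two incoming edges are opposite to each other and the two outgoing edges are opposite to each other. Let $\mathfrak L$ be the set of free homotopy classes of oriented loops in $S$, and let $\bigcirc$ be the class of contractible loops. Let $\mathfrak H$ be the quotient of the free abelian group on $\mathfrak L$ by $\bigcirc=0$ and $[\gamma]=[-\gamma]$, where $-\gamma$ is $\gamma$ with reversed orientation. A closed curve is trivial if it is contractible, and nontrivial otherwise. A state of $D$ is a map $s$ from the set of crossings to $\{0,1\}$. It determines the resolution $D_s$, a set of disjoint circles in $S$, by taking the $0$- or $1$-smoothing (Kauffman's $A$/$B$-smoothing) at each crossing. An edge $s\to s'$ of the state cube changes one crossing from $0$ to $1$. Its effect on circles is a merge of two circles into one, a split of one circle into two, or a one-circle-to-one-circle change. $V$ has basis $v_+,v_-$. $V(s)=\bigotimes_{C\in D_s}V$ and $[[D]]=\bigoplus_sV(s)$. Define linear maps on $V\otimes V\to V$: - $m(v_+\otimes v_+)=v_+$, $m(v_\pm\otimes v_\mp)=v_-$, $m(v_-\otimes v_-)=0$; - $m^0_h(v_\pm\otimes v_\mp)=v_-$, $m^0_h(v_+\otimes v_+)=m^0_h(v_-\otimes v_-)=0$; - $m^1_h(v_+\otimes v_+)=v_+$, $m^1_h(v_-\otimes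 v_+)=v_-$, and $m^1_h$ is $0$ on the other two basis vectors; - $m^2_h(v_+\otimes v_+)=v_+$, $m^2_h(v_+\otimes v_-)=v_-$, and $m^2_h$ is $0$ on the other two basis vectors. Define linear maps on $V\to V\otimes V$: - $\Delta(v_+)=v_+\otimes v_-+v_-\otimes v_+$, $\Delta(v_-)=v_-\otimes v_-$; - $\Delta^0_h(v_+)=v_+\otimes v_-+v_-\otimes v_+$, $\Delta^0_h(v_-)=0$; - $\Delta^1_h(v_+)=v_+\otimes v_-$, $\Delta^1_h(v_-)=v_-\otimes v_-$; - $\Delta^2_h(v_+)=v_-\otimes v_+$, $\Delta^2_h(v_-)=v_-\otimes v_-$. For a merge of $\gamma_1,\gamma_2$ (first and second factor) into $\gamma$, $m_h$ is: - $m$ if all three circles are trivial; - $m^1_h$ if only $\gamma_2$ is trivial; - $m^2_h$ if only $\gamma_1$ is trivial; - $m^0_h$ if only $\gamma$ is trivial; - $0$ if all three are nontrivial. For a split of $\gamma$ into $\gamma_1,\gamma_2$, $\Delta_h$ is $\Delta,\Delta^1_h,\Delta^2_h,\Delta^0_h,0$ in the same respective cases. The differential $d_h$ on $[[D]]$ is the sum over cube edges of: $m_h$ on the merging factors tensored with the identity, or $\Delta_h$ on the splitting factor tensored with the identity, or $0$ for a one-to-one change. *)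

theory Defs
  imports Main
begin

(* * crossings: a finite set X :: 'c set
   * a state s is identified with the set of crossings where it takes value 1
     (so s \<subseteq> X); a cube edge s \<rightarrow> insert x s, x \<in> X - s
   * circles of the resolution D_s: circ s :: 'k set; circles are labelled
     globally (a label denotes a curve in S), unchanged circles keep labels
   * triv k  <->  the circle k is contractible (trivial) in S
   * the effect of a cube edge on circles: ed s x
   * coefficients are Z_2; the basis vector v_+ is encoded by True,
     v_- by False.
   ------------------------------------------------------------------------ *)

datatype 'k ekind =
    Merge 'k 'k 'k   (* Merge g1 g2 g : g1 (first), g2 (second) merge into g *)
  | Split 'k 'k 'k   (* Split g g1 g2 : g splits into g1 (first), g2 (second) *)
  | OneOne 'k 'k

(* Z_2-vectors over a basis are finite sets of basis elements (sum =
   symmetric difference); the linear extension of a map given on basis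
   elements: *)
definition lin :: "('a \<Rightarrow> 'b set) \<Rightarrow> 'a set \<Rightarrow> 'b set" where
  "lin f v = {y. odd (card {b \<in> v. y \<in> f b})}"

definition vsum :: "'a set \<Rightarrow> 'a set \<Rightarrow> 'a set" where
  "vsum v w = (v - w) \<union> (w - v)"

(* maps V \<otimes> V \<rightarrow> V on basis vectors (a,b) = v_a \<otimes> v_b *)
fun m_std :: "bool \<times> bool \<Rightarrow> bool set" where
  "m_std (a, b) = (if a \<and> b then {True} else if a \<noteq> b then {False} else {})"
fun m0 :: "bool \<times> bool \<Rightarrow> bool set" where
  "m0 (a, b) = (if a \<noteq> b then {False} else {})"
fun m1 :: "bool \<times> bool \<Rightarrow> bool set" where
  "m1 (a, b) = (if a \<and> b then {True} else if \<not> a \<and> b then {False} else {})"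
fun m2 :: "bool \<times> bool \<Rightarrow> bool set" where
  "m2 (a, b) = (if a \<and> b then {True} else if a \<and> \<not> b then {False} else {})"

definition D_std :: "bool \<Rightarrow> (bool \<times> bool) set" where
  "D_std a = (if a then {(True, False), (False, True)} else {(False, False)})"
definition D0 :: "bool \<Rightarrow> (bool \<times> bool) set" where
  "D0 a = (if a then {(True, False), (False, True)} else {})"
definition D1 :: "bool \<Rightarrow> (bool \<times> bool) set" where
  "D1 a = (if a then {(True, False)} else {(False, False)})"
definition D2 :: "bool \<Rightarrow> (bool \<times> bool) set" where
  "D2 a = (if a then {(False, True)} else {(False, False)})"

(* m_h for a merge of \<gamma>1,\<gamma>2 into \<gamma>, with triviality t1 t2 t *)
definition m_h :: "bool \<Rightarrow> bool \<Rightarrow> bool \<Rightarrow> bool \<times> bool \<Rightarrow> bool set" where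
  "m_h t1 t2 t =
     (if t1 \<and> t2 \<and> t then m_std
      else if \<not> t1 \<and> t2 \<and> \<not> t then m1
      else if t1 \<and> \<not> t2 \<and> \<not> t then m2
      else if \<not> t1 \<and> \<not> t2 \<and> t then m0
      else (\<lambda>_. {}))"

(* \<Delta>_h for a split of \<gamma> into \<gamma>1,\<gamma>2, with triviality t t1 t2 *)
definition Delta_h :: "bool \<Rightarrow> bool \<Rightarrow> bool \<Rightarrow> bool \<Rightarrow> (bool \<times> bool) set" where
  "Delta_h t t1 t2 =
     (if t1 \<and> t2 \<and> t then D_std
      else if \<not> t1 \<and> t2 \<and> \<not> t then D1
      else if t1 \<and> \<not> t2 \<and> \<not> t then D2
      else if \<not> t1 \<and> \<not> t2 \<and> t then D0
      else (\<lambda>_. {}))"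

(* the only triviality patterns that occur topologically (listed cases) *)
definition triv_pattern :: "bool \<Rightarrow> bool \<Rightarrow> bool \<Rightarrow> bool" where
  "triv_pattern t1 t2 t \<longleftrightarrow>
     (t1 \<and> t2 \<and> t) \<or> (\<not> t1 \<and> t2 \<and> \<not> t) \<or> (t1 \<and> \<not> t2 \<and> \<not> t)
     \<or> (\<not> t1 \<and> \<not> t2 \<and> t) \<or> (\<not> t1 \<and> \<not> t2 \<and> \<not> t)"

(* basis of [[D]]: pairs (s, P), P = set of circles of D_s labelled v_+ *)
definition kb_basis :: "'c set \<Rightarrow> ('c set \<Rightarrow> 'k set) \<Rightarrow> ('c set \<times> 'k set) set" where
  "kb_basis X circ = {(s, P). s \<subseteq> X \<and> P \<subseteq> circ s}"

fun edge_img :: "('k \<Rightarrow> bool) \<Rightarrow> 'k ekind \<Rightarrow> 'c set \<Rightarrow> 'k set \<Rightarrow> ('c set \<times> 'k set) set" where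
  "edge_img triv (Merge g1 g2 g) s' P =
     (\<lambda>r. (s', (P - {g1, g2}) \<union> (if r then {g} else {})))
       ` m_h (triv g1) (triv g2) (triv g) (g1 \<in> P, g2 \<in> P)"
| "edge_img triv (Split g g1 g2) s' P =
     (\<lambda>(r1, r2). (s', (P - {g}) \<union> (if r1 then {g1} else {}) \<union> (if r2 then {g2} else {})))
       ` Delta_h (triv g) (triv g1) (triv g2) (g \<in> P)"
| "edge_img triv (OneOne g g') s' P = {}"

definition dh_basis :: "'c set \<Rightarrow> ('k \<Rightarrow> bool) \<Rightarrow> ('c set \<Rightarrow> 'c \<Rightarrow> 'k ekind)
     \<Rightarrow> 'c set \<times> 'k set \<Rightarrow> ('c set \<times> 'k set) set" where
  "dh_basis X triv ed sP = (case sP of (s, P) \<Rightarrow>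
      (\<Union>x \<in> X - s. edge_img triv (ed s x) (insert x s) P))"

definition dh :: "'c set \<Rightarrow> ('k \<Rightarrow> bool) \<Rightarrow> ('c set \<Rightarrow> 'c \<Rightarrow> 'k ekind)
     \<Rightarrow> ('c set \<times> 'k set) set \<Rightarrow> ('c set \<times> 'k set) set" where
  "dh X triv ed = lin (dh_basis X triv ed)"

definition cube_data :: "'c set \<Rightarrow> ('c set \<Rightarrow> 'k set) \<Rightarrow> ('k \<Rightarrow> bool)
     \<Rightarrow> ('c set \<Rightarrow> 'c \<Rightarrow> 'k ekind) \<Rightarrow> bool" where
  "cube_data X circ triv ed \<longleftrightarrow>
     finite X \<and> (\<forall>s. s \<subseteq> X \<longrightarrow> finite (circ s)) \<and>
     (\<forall>s x. s \<subseteq> X \<longrightarrow> x \<in> X - s \<longrightarrow>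
        (case ed s x of
           Merge g1 g2 g \<Rightarrow> g1 \<in> circ s \<and> g2 \<in> circ s \<and> g1 \<noteq> g2 \<and>
              g \<notin> circ s - {g1, g2} \<and> circ (insert x s) = insert g (circ s - {g1, g2}) \<and>
              triv_pattern (triv g1) (triv g2) (triv g)
         | Split g g1 g2 \<Rightarrow> g \<in> circ s \<and> g1 \<noteq> g2 \<and>
              g1 \<notin> circ s - {g} \<and> g2 \<notin> circ s - {g} \<and>
              circ (insert x s) = {g1, g2} \<union> (circ s - {g}) \<and>
              triv_pattern (triv g1) (triv g2) (triv g)
         | OneOne g g' \<Rightarrow> g \<in> circ s \<and> g' \<notin> circ s - {g} \<and>
              circ (insert x s) = insert g' (circ s - {g})))"

(* cp s = the circle C_s of D_s through the point p; consistency along edges *)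
definition point_data :: "'c set \<Rightarrow> ('c set \<Rightarrow> 'k set)
     \<Rightarrow> ('c set \<Rightarrow> 'c \<Rightarrow> 'k ekind) \<Rightarrow> ('c set \<Rightarrow> 'k) \<Rightarrow> bool" where
  "point_data X circ ed cp \<longleftrightarrow>
     (\<forall>s. s \<subseteq> X \<longrightarrow> cp s \<in> circ s) \<and>
     (\<forall>s x. s \<subseteq> X \<longrightarrow> x \<in> X - s \<longrightarrow>
        (case ed s x of
           Merge g1 g2 g \<Rightarrow> cp (insert x s) = (if cp s \<in> {g1, g2} then g else cp s)
         | Split g g1 g2 \<Rightarrow> (if cp s = g then cp (insert x s) \<in> {g1, g2}
                             else cp (insert x s) = cp s)
         | OneOne g g' \<Rightarrow> cp (insert x s) = (if cp s = g then g' else cp s)))"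

(* the diagram D \<squnion> O: circle labels 'k option, None = the new circle O *)
definition circO :: "('c set \<Rightarrow> 'k set) \<Rightarrow> 'c set \<Rightarrow> 'k option set" where
  "circO circ s = insert None (Some ` circ s)"
definition trivO :: "('k \<Rightarrow> bool) \<Rightarrow> 'k option \<Rightarrow> bool" where
  "trivO triv k = (case k of None \<Rightarrow> True | Some k' \<Rightarrow> triv k')"
definition edO :: "('c set \<Rightarrow> 'c \<Rightarrow> 'k ekind) \<Rightarrow> 'c set \<Rightarrow> 'c \<Rightarrow> 'k option ekind" where
  "edO ed s x = map_ekind Some (ed s x)"

(* basis of the subcomplex [[D]] \<otimes> v_+ (O labelled v_+) and of the
   complementary span, which represents the quotient [[D \<squnion> O]]_{v_+=0} *)
definition basis_plus :: "'c set \<Rightarrow> ('c set \<Rightarrow> 'k set) \<Rightarrow> ('c set \<times> 'k option set) set" where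
  "basis_plus X circ = {b \<in> kb_basis X (circO circ). None \<in> snd b}"
definition basis_minus :: "'c set \<Rightarrow> ('c set \<Rightarrow> 'k set) \<Rightarrow> ('c set \<times> 'k option set) set" where
  "basis_minus X circ = {b \<in> kb_basis X (circO circ). None \<notin> snd b}"

definition Phi_basis :: "('k \<Rightarrow> bool) \<Rightarrow> ('c set \<Rightarrow> 'k)
     \<Rightarrow> 'c set \<times> 'k option set \<Rightarrow> ('c set \<times> 'k set) set" where
  "Phi_basis triv cp sP = (case sP of (s, P) \<Rightarrow>
     (\<lambda>r. (s, {k. Some k \<in> P \<and> k \<noteq> cp s} \<union> (if r then {cp s} else {})))
       ` m_h (triv (cp s)) True (triv (cp s)) (Some (cp s) \<in> P, None \<in> P))"

definition Psi_basis :: "('k \<Rightarrow> bool) \<Rightarrow> ('c set \<Rightarrow> 'k)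
     \<Rightarrow> 'c set \<times> 'k set \<Rightarrow> ('c set \<times> 'k option set) set" where
  "Psi_basis triv cp sP = (case sP of (s, P) \<Rightarrow>
     (\<lambda>(r1, r2). (s, Some ` (P - {cp s}) \<union> (if r1 then {Some (cp s)} else {})
                     \<union> (if r2 then {None} else {})))
       ` Delta_h (triv (cp s)) (triv (cp s)) True (cp s \<in> P))"

definition chain_iso :: "'a set \<Rightarrow> ('a set \<Rightarrow> 'a set) \<Rightarrow> 'b set \<Rightarrow> ('b set \<Rightarrow> 'b set)
     \<Rightarrow> ('a set \<Rightarrow> 'b set) \<Rightarrow> bool" where
  "chain_iso BA dA BB dB L \<longleftrightarrow>
     (\<forall>v w. v \<subseteq> BA \<longrightarrow> w \<subseteq> BA \<longrightarrow> L (vsum v w) = vsum (L v) (L w)) \<and>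
     bij_betw L (Pow BA) (Pow BB) \<and>
     (\<forall>v. v \<subseteq> BA \<longrightarrow> L (dA v) = dB (L v))"

end

theory Submission
  imports Defs
begin

text \<open>No cube edge of \<open>D \<squnion> O\<close> touches the trivial crossingless circle \<open>O\<close>, so the
  differential of \<open>D \<squnion> O\<close> commutes with \<open>b \<mapsto> b \<otimes> v\<^sub>\<plusminus>\<close>. Merging a trivial circle
  labelled \<open>v\<^sub>+\<close> into \<open>C\<^sub>s\<close> is the identity in every triviality case
  (\<open>m\<^sub>h(v \<otimes> v\<^sub>+) = v\<close>), so \<open>\<Phi>\<close> inverts \<open>b \<mapsto> b \<otimes> v\<^sub>+\<close>; and modulo \<open>v\<^sub>+\<close> on \<open>O\<close>,
  \<open>\<Delta>\<^sub>h(v) \<equiv> v \<otimes> v\<^sub>-\<close>, so \<open>\<Psi>\<close> followed by the quotient map is \<open>b \<mapsto> b \<otimes> v\<^sub>-\<close>.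
  Both maps are thus the identifications of \<open>[[D]]\<close> with the two halves of
  \<open>[[D]] \<otimes> V\<close>, which are chain maps.\<close>

lemma lin_subset_UN: "lin f v \<subseteq> \<Union> (f ` v)"
proof
  fix y assume "y \<in> lin f v"
  then have "{b \<in> v. y \<in> f b} \<noteq> {}"
    unfolding lin_def by (metis (no_types) card.empty even_zero mem_Collect_eq)
  then show "y \<in> \<Union> (f ` v)" by auto
qed

lemma lin_Int: "lin f v \<inter> B = lin (\<lambda>b. f b \<inter> B) v \<inter> B"
  unfolding lin_def by auto

lemma lin_image_inj:
  assumes "inj h" and "\<And>b. b \<in> v \<Longrightarrow> g (h b) = h ` f b"
  shows "lin g (h ` v) = h ` lin f v"
proof (rule set_eqI)
  fix y
  show "y \<in> lin g (h ` v) \<longleftrightarrow> y \<in> h ` lin f v"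
  proof (cases "y \<in> range h")
    case True
    then obtain z where z: "y = h z" by auto
    have "{c \<in> h ` v. y \<in> g c} = h ` {b \<in> v. z \<in> f b}"
      using assms z by (auto simp: inj_eq image_iff)
    then have "card {c \<in> h ` v. y \<in> g c} = card {b \<in> v. z \<in> f b}"
      using assms(1) by (simp add: card_image inj_on_subset)
    then show ?thesis using z assms(1) by (auto simp: lin_def inj_eq)
  next
    case False
    then have "{c \<in> h ` v. y \<in> g c} = {}" using assms(2) by auto
    then have "y \<notin> lin g (h ` v)" by (simp only: lin_def mem_Collect_eq) simp
    then show ?thesis using False by blast
  qed
qed

lemma lin_singletons:
  assumes "\<And>b. b \<in> v \<Longrightarrow> f b = {h b}" and "inj_on h v"
  shows "lin f v = h ` v"
proof (rule set_eqI)
  fix y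
  have "{b \<in> v. y \<in> f b} = (if y \<in> h ` v then {the_inv_into v h y} else {})"
    using assms by (auto simp: the_inv_into_f_f inj_on_def)
  then show "y \<in> lin f v \<longleftrightarrow> y \<in> h ` v"
    by (simp add: lin_def)
qed

lemma vsum_image: "inj h \<Longrightarrow> h ` vsum v w = vsum (h ` v) (h ` w)"
  unfolding vsum_def by (simp add: image_Un image_set_diff)

lemma chain_iso_image:
  assumes "inj h" and "h ` BA = BB"
    and "\<And>u. u \<subseteq> BA \<Longrightarrow> L u = h ` u"
    and "\<And>u. u \<subseteq> BA \<Longrightarrow> dB (h ` u) = h ` dA u"
    and "\<And>u. u \<subseteq> BA \<Longrightarrow> dA u \<subseteq> BA"
  shows "chain_iso BA dA BB dB L"
proof -
  have "bij_betw (image h) (Pow BA) (Pow BB)"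
    using assms(1,2) by (intro bij_betw_Pow) (simp add: bij_betw_def inj_on_subset[OF _ subset_UNIV])
  then have "bij_betw L (Pow BA) (Pow BB)"
    by (rule bij_betw_cong[THEN iffD1, rotated]) (simp add: assms(3))
  moreover have "vsum v w \<subseteq> BA" if "v \<subseteq> BA" "w \<subseteq> BA" for v w
    using that by (auto simp: vsum_def)
  ultimately show ?thesis
    unfolding chain_iso_def using assms by (simp add: vsum_image)
qed

lemma chain_iso_inverse_image:
  assumes "inj h" and "h ` BA = BB"
    and "\<And>u. u \<subseteq> BA \<Longrightarrow> L (h ` u) = u"
    and "\<And>u. u \<subseteq> BA \<Longrightarrow> dB (h ` u) = h ` dA u"
    and "\<And>u. u \<subseteq> BA \<Longrightarrow> dA u \<subseteq> BA"
  shows "chain_iso BB dB BA dA L"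
proof -
  have preimage: "\<exists>u. u \<subseteq> BA \<and> v = h ` u" if "v \<subseteq> BB" for v
    using that assms(2) subset_image_iff by metis
  have L_inverse: "L v \<subseteq> BA \<and> h ` L v = v" if "v \<subseteq> BB" for v
    using preimage[OF that] assms(3) by auto
  have "bij_betw L (Pow BB) (Pow BA)"
    by (rule bij_betw_byWitness[where f' = "image h"])
       (use L_inverse assms(2,3) in \<open>auto simp: image_mono\<close>)
  moreover have "L (vsum v w) = vsum (L v) (L w)" if "v \<subseteq> BB" "w \<subseteq> BB" for v w
  proof -
    have "vsum v w = h ` vsum (L v) (L w)"
      using L_inverse that assms(1) by (simp add: vsum_image)
    moreover have "vsum (L v) (L w) \<subseteq> BA"
      using L_inverse that by (auto simp: vsum_def)
    ultimately show ?thesis using assms(3) by simp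
  qed
  moreover have "L (dB v) = dA (L v)" if "v \<subseteq> BB" for v
    using L_inverse[OF that] assms(3,4,5) by metis
  ultimately show ?thesis unfolding chain_iso_def by blast
qed

text \<open>\<open>tensor_O a b\<close> is the basis element \<open>b \<otimes> v\<^sub>a\<close> of \<open>[[D \<squnion> O]]\<close>.\<close>

definition tensor_O :: "bool \<Rightarrow> 'c set \<times> 'k set \<Rightarrow> 'c set \<times> 'k option set" where
  "tensor_O a b = (fst b, Some ` snd b \<union> (if a then {None} else {}))"

lemma tensor_O_inverse: "(fst (tensor_O a b), {k. Some k \<in> snd (tensor_O a b)}) = b"
  by (simp add: tensor_O_def image_iff)

lemma inj_tensor_O: "inj (tensor_O a)"
  by (metis injI tensor_O_inverse)

lemma image_tensor_O_kb_basis: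
  "tensor_O a ` kb_basis X circ = {b \<in> kb_basis X (circO circ). (None \<in> snd b) = a}"
proof (rule set_eqI, rule iffI)
  fix b assume "b \<in> tensor_O a ` kb_basis X circ"
  then show "b \<in> {b \<in> kb_basis X (circO circ). (None \<in> snd b) = a}"
    by (auto simp: tensor_O_def kb_basis_def circO_def split: if_splits)
next
  fix b assume b: "b \<in> {b \<in> kb_basis X (circO circ). (None \<in> snd b) = a}"
  obtain s P where sP: "b = (s, P)" by force
  have "P = Some ` {k. Some k \<in> P} \<union> (if a then {None} else {})"
  proof (rule set_eqI)
    show "x \<in> P \<longleftrightarrow> x \<in> Some ` {k. Some k \<in> P} \<union> (if a then {None} else {})" for x
      using b sP by (cases x) auto
  qed
  then have "b = tensor_O a (s, {k. Some k \<in> P})"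
    by (simp add: sP tensor_O_def)
  moreover have "(s, {k. Some k \<in> P}) \<in> kb_basis X circ"
    using b sP by (auto simp: kb_basis_def circO_def)
  ultimately show "b \<in> tensor_O a ` kb_basis X circ" by blast
qed

lemma edge_img_tensor_O:
  "edge_img (trivO triv) (map_ekind Some e) s' (snd (tensor_O a (s, Q)))
     = tensor_O a ` edge_img triv e s' Q"
proof (cases e)
  case (Merge g1 g2 g)
  have mem: "(Some g1 \<in> snd (tensor_O a (s, Q))) = (g1 \<in> Q)"
    "(Some g2 \<in> snd (tensor_O a (s, Q))) = (g2 \<in> Q)"
    by (auto simp: tensor_O_def)
  have "(s', snd (tensor_O a (s, Q)) - {Some g1, Some g2} \<union> (if r then {Some g} else {}))
       = tensor_O a (s', (Q - {g1, g2}) \<union> (if r then {g} else {}))" for r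
    by (auto simp: tensor_O_def)
  then show ?thesis using Merge
    by (simp only: edge_img.simps ekind.map mem image_image) (simp add: trivO_def)
next
  case (Split g g1 g2)
  have mem: "(Some g \<in> snd (tensor_O a (s, Q))) = (g \<in> Q)"
    by (auto simp: tensor_O_def)
  have "(\<lambda>(r1, r2). (s', snd (tensor_O a (s, Q)) - {Some g}
          \<union> (if r1 then {Some g1} else {}) \<union> (if r2 then {Some g2} else {})))
       = tensor_O a \<circ> (\<lambda>(r1, r2). (s', (Q - {g}) \<union> (if r1 then {g1} else {}) \<union> (if r2 then {g2} else {})))"
    by (rule ext) (auto simp: tensor_O_def split: prod.splits)
  then show ?thesis using Split
    by (simp only: edge_img.simps ekind.map mem image_comp) (simp add: trivO_def)
qed simp

lemma dh_tensor_O: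
  "dh X (trivO triv) (edO ed) (tensor_O a ` u) = tensor_O a ` dh X triv ed u"
proof -
  have "dh_basis X (trivO triv) (edO ed) (tensor_O a (s, Q)) = tensor_O a ` dh_basis X triv ed (s, Q)"
    for s Q
  proof -
    have "dh_basis X (trivO triv) (edO ed) (tensor_O a (s, Q))
        = (\<Union>x \<in> X - s. edge_img (trivO triv) (map_ekind Some (ed s x)) (insert x s)
                                  (snd (tensor_O a (s, Q))))"
      by (simp add: dh_basis_def edO_def tensor_O_def)
    also have "\<dots> = tensor_O a ` dh_basis X triv ed (s, Q)"
      by (simp add: edge_img_tensor_O dh_basis_def image_UN)
    finally show ?thesis .
  qed
  then show ?thesis
    unfolding dh_def by (intro lin_image_inj[OF inj_tensor_O]) (metis surj_pair)
qed

lemma edge_img_kb_basis: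
  assumes "cube_data X circ triv ed" and "s \<subseteq> X" and "x \<in> X - s" and "P \<subseteq> circ s"
  shows "edge_img triv (ed s x) (insert x s) P \<subseteq> kb_basis X circ"
proof -
  have ins: "insert x s \<subseteq> X" using assms by blast
  note edge = assms(1)[unfolded cube_data_def, THEN conjunct2, THEN conjunct2, rule_format, OF assms(2,3)]
  show ?thesis
  proof (cases "ed s x")
    case (Merge g1 g2 g)
    then have "circ (insert x s) = insert g (circ s - {g1, g2})"
      using edge by simp
    then show ?thesis using Merge ins assms(4) by (auto simp: kb_basis_def split: if_splits)
  next
    case (Split g g1 g2)
    then have "circ (insert x s) = {g1, g2} \<union> (circ s - {g})"
      using edge by simp
    then show ?thesis using Split ins assms(4) by (auto simp: kb_basis_def split: if_splits)
  qed simp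
qed

lemma dh_kb_basis:
  assumes "cube_data X circ triv ed" and "u \<subseteq> kb_basis X circ"
  shows "dh X triv ed u \<subseteq> kb_basis X circ"
proof -
  have "dh_basis X triv ed (s, P) \<subseteq> kb_basis X circ" if "(s, P) \<in> kb_basis X circ" for s P
  proof -
    have "s \<subseteq> X" "P \<subseteq> circ s" using that by (simp_all add: kb_basis_def)
    then show ?thesis
      unfolding dh_basis_def prod.case by (intro UN_least edge_img_kb_basis[OF assms(1)])
  qed
  then have "dh_basis X triv ed b \<subseteq> kb_basis X circ" if "b \<in> u" for b
    using that assms(2) by (cases b) auto
  then have "\<Union> (dh_basis X triv ed ` u) \<subseteq> kb_basis X circ"
    by (rule UN_least)
  then show ?thesis
    unfolding dh_def using lin_subset_UN by (rule order.trans[rotated])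
qed

lemma m_h_trivial_plus: "m_h t True t (a, True) = {a}"
  by (cases t; cases a) (simp_all add: m_h_def)

lemma Phi_basis_tensor_O_plus: "Phi_basis triv cp (tensor_O True b) = {b}"
proof -
  obtain s R where b: "b = (s, R)" by (cases b)
  have "{k. Some k \<in> Some ` R \<union> {None} \<and> k \<noteq> cp s} \<union> (if cp s \<in> R then {cp s} else {}) = R"
    by auto
  then show ?thesis
    by (simp add: b Phi_basis_def tensor_O_def image_iff m_h_trivial_plus del: Un_insert_right)
qed

lemma Psi_basis_minus: "Psi_basis triv cp b \<inter> {c. None \<notin> snd c} = {tensor_O False b}"
proof -
  obtain s P where b: "b = (s, P)" by (cases b)
  have "insert (Some (cp s)) (Some ` (P - {cp s})) = Some ` P" if "cp s \<in> P"
    using that by auto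
  moreover have "Some ` (P - {cp s}) = Some ` P" if "cp s \<notin> P"
    using that by auto
  ultimately show ?thesis
    by (cases "triv (cp s)"; cases "cp s \<in> P")
       (auto simp: b Psi_basis_def tensor_O_def Delta_h_def D_std_def D1_def)
qed

lemma lin_Phi_tensor_O: "lin (Phi_basis triv cp) (tensor_O True ` w) = w"
proof -
  let ?h = "\<lambda>c. (fst c, {k. Some k \<in> snd c})"
  have "inj_on ?h (tensor_O True ` w)"
  proof (rule inj_onI)
    fix c d assume "c \<in> tensor_O True ` w" "d \<in> tensor_O True ` w" and "?h c = ?h d"
    then obtain a b where "c = tensor_O True a" "d = tensor_O True b" and "?h c = ?h d"
      by blast
    then show "c = d" by (simp only: tensor_O_inverse)
  qed
  then have "lin (Phi_basis triv cp) (tensor_O True ` w) = ?h ` tensor_O True ` w"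
    by (rule lin_singletons[rotated]) (erule imageE, simp only: Phi_basis_tensor_O_plus tensor_O_inverse)
  then show ?thesis by (simp add: image_image tensor_O_inverse)
qed

lemma lin_Psi_basis_minus:
  "lin (Psi_basis triv cp) w \<inter> basis_minus X circ = tensor_O False ` w \<inter> basis_minus X circ"
proof -
  have "Psi_basis triv cp b \<inter> basis_minus X circ
      = (Psi_basis triv cp b \<inter> {c. None \<notin> snd c}) \<inter> basis_minus X circ" for b
    by (auto simp: basis_minus_def)
  then have Psi: "Psi_basis triv cp b \<inter> basis_minus X circ = {tensor_O False b} \<inter> basis_minus X circ"
    for b by (simp only: Psi_basis_minus)
  have "lin (Psi_basis triv cp) w \<inter> basis_minus X circ
      = lin (\<lambda>b. Psi_basis triv cp b \<inter> basis_minus X circ) w \<inter> basis_minus X circ"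
    by (rule lin_Int)
  also have "\<dots> = lin (\<lambda>b. {tensor_O False b}) w \<inter> basis_minus X circ"
    by (simp only: Psi lin_Int[symmetric])
  also have "lin (\<lambda>b. {tensor_O False b}) w = tensor_O False ` w"
    by (rule lin_singletons) (auto intro: inj_on_subset[OF inj_tensor_O])
  finally show ?thesis .
qed

lemma image_tensor_O_plus_kb_basis: "tensor_O True ` kb_basis X circ = basis_plus X circ"
  by (simp add: image_tensor_O_kb_basis basis_plus_def)

lemma image_tensor_O_minus_kb_basis: "tensor_O False ` kb_basis X circ = basis_minus X circ"
  by (simp add: image_tensor_O_kb_basis basis_minus_def)

lemma dh_basis_plus:
  assumes "cube_data X circ triv ed" and "v \<subseteq> basis_plus X circ"
  shows "dh X (trivO triv) (edO ed) v \<subseteq> basis_plus X circ"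
proof -
  have "v \<subseteq> tensor_O True ` kb_basis X circ"
    using assms(2) by (simp add: image_tensor_O_plus_kb_basis)
  then obtain u where "u \<subseteq> kb_basis X circ" and "v = tensor_O True ` u"
    unfolding subset_image_iff by blast
  then show ?thesis
    using dh_kb_basis[OF assms(1)]
    by (auto simp: image_tensor_O_plus_kb_basis[symmetric] dh_tensor_O)
qed

lemma chain_iso_Phi:
  assumes "cube_data X circ triv ed"
  shows "chain_iso (basis_plus X circ) (dh X (trivO triv) (edO ed))
           (kb_basis X circ) (dh X triv ed) (lin (Phi_basis triv cp))"
  by (rule chain_iso_inverse_image[OF inj_tensor_O image_tensor_O_plus_kb_basis])
     (simp_all add: lin_Phi_tensor_O dh_tensor_O dh_kb_basis[OF assms])

lemma chain_iso_Psi: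
  assumes "cube_data X circ triv ed"
  shows "chain_iso (kb_basis X circ) (dh X triv ed) (basis_minus X circ)
           (\<lambda>w. dh X (trivO triv) (edO ed) w \<inter> basis_minus X circ)
           (\<lambda>v. lin (Psi_basis triv cp) v \<inter> basis_minus X circ)"
proof (rule chain_iso_image[OF inj_tensor_O image_tensor_O_minus_kb_basis])
  note closed = dh_kb_basis[OF assms]
  have in_minus: "tensor_O False ` u \<inter> basis_minus X circ = tensor_O False ` u"
    if "u \<subseteq> kb_basis X circ" for u
    using that image_tensor_O_minus_kb_basis by blast
  show "lin (Psi_basis triv cp) u \<inter> basis_minus X circ = tensor_O False ` u"
    and "dh X (trivO triv) (edO ed) (tensor_O False ` u) \<inter> basis_minus X circ
           = tensor_O False ` dh X triv ed u"
    if "u \<subseteq> kb_basis X circ" for u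
    using that closed by (simp_all add: lin_Psi_basis_minus dh_tensor_O in_minus)
  show "dh X triv ed u \<subseteq> kb_basis X circ" if "u \<subseteq> kb_basis X circ" for u
    using that by (rule closed)
qed

theorem lemma1:
  fixes X :: "'c set" and circ :: "'c set \<Rightarrow> 'k set" and triv :: "'k \<Rightarrow> bool"
    and ed :: "'c set \<Rightarrow> 'c \<Rightarrow> 'k ekind" and cp :: "'c set \<Rightarrow> 'k"
  assumes "cube_data X circ triv ed"
    and "point_data X circ ed cp"
  shows "(\<forall>v. v \<subseteq> basis_plus X circ \<longrightarrow>
            dh X (trivO triv) (edO ed) v \<subseteq> basis_plus X circ)
    \<and> chain_iso (basis_plus X circ) (dh X (trivO triv) (edO ed))
                (kb_basis X circ) (dh X triv ed)
                (lin (Phi_basis triv cp))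
    \<and> chain_iso (kb_basis X circ) (dh X triv ed)
                (basis_minus X circ)
                (\<lambda>w. dh X (trivO triv) (edO ed) w \<inter> basis_minus X circ)
                (\<lambda>v. lin (Psi_basis triv cp) v \<inter> basis_minus X circ)"
  using dh_basis_plus[OF assms(1)] chain_iso_Phi[OF assms(1)] chain_iso_Psi[OF assms(1)]
  by blast

end
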